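(* Let $\langle k\rangle,\langle k^2\rangle,\langle k^3\rangle$ be the first three moments of a degree distribution on the nonnegative integers, with $\langle k\rangle>0$, $\langle k^2\rangle-\langle k\rangle^2>0$ and $\langle k^2\rangle>\langle k\rangle$. Define $$\alpha=\frac{\langle k^2\rangle^2-\langle k\rangle\langle k^3\rangle}{\langle k^2\rangle-\langle k\rangle^2},\qquad \beta=\frac{\langle k^3\rangle-\langle k^2\rangle\langle k\rangle}{\langle k^2\rangle-\langle k\rangle^2}-1,$$ and for a parameter $\delta>0$ consider the system of ODEs \begin{align*} \dot w&=\langle k\rangle\delta x-w,\\ \dot x&=z-(\delta+1)x+\frac{\alpha\delta}{\langle k\rangle}\cdot\frac{(1-w)x(1-3x-z)}{(1-x-z)^2}+\beta\delta\cdot\frac{x(1-3x-z)}{1-x-z},\\ \dot z&=-2z+2\delta x+\frac{2\alpha\delta}{\langle k\rangle}\cdot\frac{(1-w)x^2}{(1-x-z)^2}+2\beta\delta\cdot\frac{x^2}{1-x-z}. \end{align*} Let $\delta_c=\dfrac{\langle k\rangle}{\langle k^2\rangle-\langle k\rangle}$. Then the disease-free equilibrium $(w,x,z)=(0,0,0)$ is locally asymptotically stable if $\delta<\delta_c$ and unstable if $\delta>\delta_c$.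
   Context: This is the nondimensionalized super compact pairwise (SCPW) SIS epidemic model on a network: $w$ is the proportion of infectious nodes, $x$, $z$ are the proportions of susceptible–infectious and infectious–infectious links, and $\delta=\tau/\gamma$ is the ratio of transmission rate to recovery rate. The model arises with the conservation laws $v+w=1$ and $2x+y+z=1$ ($v$ the susceptible proportion, $y$ the susceptible–susceptible link proportion), which have been used to eliminate $v$ and $y$. Stability refers to local stability of the equilibrium of the ODE system. *)

theory Defs
  imports "HOL-Analysis.Analysis"
begin

definition ode_solution :: "('a::real_normed_vector \<Rightarrow> 'a) \<Rightarrow> (real \<Rightarrow> 'a) \<Rightarrow> real \<Rightarrow> bool" where
  "ode_solution f y T \<longleftrightarrow> (\<forall>t\<in>{0..T}. (y has_vector_derivative f (y t)) (at t within {0..T}))"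

definition lyap_stable :: "('a::real_normed_vector \<Rightarrow> 'a) \<Rightarrow> 'a \<Rightarrow> bool" where
  "lyap_stable f e \<longleftrightarrow> f e = 0 \<and>
     (\<forall>\<epsilon>>0. \<exists>\<eta>>0. \<forall>y T. ode_solution f y T \<and> dist (y 0) e < \<eta> \<longrightarrow>
        (\<forall>t\<in>{0..T}. dist (y t) e < \<epsilon>))"

definition loc_asym_stable :: "('a::real_normed_vector \<Rightarrow> 'a) \<Rightarrow> 'a \<Rightarrow> bool" where
  "loc_asym_stable f e \<longleftrightarrow> lyap_stable f e \<and>
     (\<exists>\<eta>>0. \<forall>y. (\<forall>T\<ge>0. ode_solution f y T) \<and> dist (y 0) e < \<eta> \<longrightarrow> (y \<longlongrightarrow> e) at_top)"

definition eq_unstable :: "('a::real_normed_vector \<Rightarrow> 'a) \<Rightarrow> 'a \<Rightarrow> bool" where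
  "eq_unstable f e \<longleftrightarrow> f e = 0 \<and> \<not> lyap_stable f e"

definition scpw_field :: "real \<Rightarrow> real \<Rightarrow> real \<Rightarrow> real \<Rightarrow> real \<times> real \<times> real \<Rightarrow> real \<times> real \<times> real" where
  "scpw_field k1 \<alpha> \<beta> \<delta> s = (case s of (w, x, z) \<Rightarrow>
     (k1 * \<delta> * x - w,
      z - (\<delta> + 1) * x + (\<alpha> * \<delta> / k1) * ((1 - w) * x * (1 - 3*x - z) / (1 - x - z)^2)
        + \<beta> * \<delta> * (x * (1 - 3*x - z) / (1 - x - z)),
      - 2 * z + 2 * \<delta> * x + (2 * \<alpha> * \<delta> / k1) * ((1 - w) * x^2 / (1 - x - z)^2)
        + 2 * \<beta> * \<delta> * (x^2 / (1 - x - z))))"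

end

theory Submission
  imports Defs
begin

(* Linearised at the origin, the w-equation is driven by x without feeding back, so the spectrum
   is {-1} together with that of the (x,z)-block [[a, 1], [2\<delta>, -2]], a = \<delta>(\<alpha>/k1 + \<beta>) - \<delta> - 1.
   As \<alpha>/k1 + \<beta> = (k2 - k1)/k1 = 1/\<delta>c, the block has determinant -\<sigma> with
   \<sigma> = 2a + 2\<delta> = 2(\<delta>/\<delta>c - 1), and its trace a - 2 is negative when \<sigma> < 0.
   A single quadratic form V, which solves the Lyapunov equation of the block and is coupled to w
   with a suitable weight, has derivative along the linearisation equal to \<sigma> times a positive
   definite form; the nonlinearity is O(|y|^2), so near 0 the derivative of V along solutions has
   the sign of \<sigma>.  For \<sigma> < 0, V is positive definite and Lyapunov's direct method gives
   asymptotic stability.  For \<sigma> > 0, V is positive somewhere in every neighbourhood of 0 and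
   grows along solutions, which therefore leave a fixed ball (Chetaev); the solutions needed for
   this come from Picard iteration for a globally Lipschitz extension of the field. *)

section \<open>Lyapunov's direct method\<close>

lemma deriv_nonneg_imp_mono_within:
  fixes h h' :: "real \<Rightarrow> real"
  assumes "a \<le> b"
    and deriv: "\<And>t. t \<in> {a..b} \<Longrightarrow> (h has_real_derivative h' t) (at t within {a..b})"
    and nonneg: "\<And>t. t \<in> {a..b} \<Longrightarrow> h' t \<ge> 0"
  shows "h a \<le> h b"
proof (rule DERIV_nonneg_imp_increasing_open[OF \<open>a \<le> b\<close>])
  show "continuous_on {a..b} h"
    unfolding continuous_on_eq_continuous_within using deriv DERIV_continuous by blast
  fix t assume "a < t" "t < b"
  then have "(h has_real_derivative h' t) (at t)"
    using deriv[of t] at_within_Icc_at[of a t b] by auto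
  then show "\<exists>y. DERIV h t :> y \<and> 0 \<le> y" using nonneg[of t] \<open>a < t\<close> \<open>t < b\<close> by auto
qed

lemma continuous_on_first_crossing:
  fixes g :: "real \<Rightarrow> real"
  assumes cont: "continuous_on {0..T} g" and "g 0 < e" and "t \<in> {0..T}" "e \<le> g t"
  obtains \<tau> where "\<tau> \<in> {0..T}" "g \<tau> = e" "\<And>s. s \<in> {0..\<tau>} \<Longrightarrow> g s \<le> e"
proof -
  define S where "S = {t \<in> {0..T}. e \<le> g t}"
  have "closed S" unfolding S_def
    by (rule continuous_on_closed_Collect_le[OF continuous_on_const cont]) simp
  moreover have "S \<noteq> {}" "bdd_below S" using assms unfolding S_def by (auto intro: bdd_belowI[of _ 0])
  ultimately have "Inf S \<in> S" by (intro closed_contains_Inf)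
  then have \<tau>: "Inf S \<in> {0..T}" "e \<le> g (Inf S)" unfolding S_def by auto
  have below: "g s < e" if "s \<in> {0..T}" "s < Inf S" for s
  proof (rule ccontr)
    assume "\<not> g s < e"
    then have "s \<in> S" using that unfolding S_def by auto
    then show False using cInf_lower[OF _ \<open>bdd_below S\<close>] that by force
  qed
  obtain s where s: "0 \<le> s" "s \<le> Inf S" "g s = e"
    using IVT'[of g 0 e "Inf S"] \<tau> \<open>g 0 < e\<close> continuous_on_subset[OF cont] by auto
  then have "s = Inf S" using below[of s] \<tau> by force
  then show thesis
    using that[of "Inf S"] \<tau> s below by (force simp: less_eq_real_def)
qed

lemma ode_solution_continuous_on: "ode_solution f y T \<Longrightarrow> continuous_on {0..T} y"
  unfolding ode_solution_def by (intro continuous_on_vector_derivative) auto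

lemma ode_solution_restrict:
  assumes "ode_solution f y T" "t \<le> T"
  shows "ode_solution f y t"
  unfolding ode_solution_def
proof
  fix s assume "s \<in> {0..t}"
  then have "(y has_vector_derivative f (y s)) (at s within {0..T})"
    using assms unfolding ode_solution_def by auto
  then show "(y has_vector_derivative f (y s)) (at s within {0..t})"
    by (rule has_vector_derivative_within_subset) (use assms in auto)
qed

lemma ode_solution_cong:
  assumes "ode_solution g y T" "\<And>t. t \<in> {0..T} \<Longrightarrow> g (y t) = f (y t)"
  shows "ode_solution f y T"
  using assms unfolding ode_solution_def by auto

lemma ode_solution_comp_has_real_derivative:
  fixes V :: "'a::real_normed_vector \<Rightarrow> real"
  assumes "ode_solution f y T" "t \<in> {0..T}" "(V has_derivative V') (at (y t))"
  shows "((\<lambda>s. V (y s)) has_real_derivative V' (f (y t))) (at t within {0..T})"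
proof -
  have "(y has_vector_derivative f (y t)) (at t within {0..T})"
    using assms unfolding ode_solution_def by blast
  from vector_derivative_diff_chain_within[OF this has_derivative_at_withinI[OF assms(3)]]
  show ?thesis by (simp add: has_real_derivative_iff_has_vector_derivative o_def)
qed

lemma ode_solution_lyapunov_mono:
  fixes V :: "'a::real_normed_vector \<Rightarrow> real"
  assumes sol: "ode_solution f y T" and "0 \<le> T"
    and deriv: "\<And>t. t \<in> {0..T} \<Longrightarrow> (V has_derivative V' (y t)) (at (y t))"
    and nonneg: "\<And>t. t \<in> {0..T} \<Longrightarrow> V' (y t) (f (y t)) \<ge> 0"
  shows "V (y 0) \<le> V (y T)"
  by (rule deriv_nonneg_imp_mono_within[OF \<open>0 \<le> T\<close>
        ode_solution_comp_has_real_derivative[OF sol _ deriv] nonneg])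

lemma lyapunov_nonincreasing:
  fixes V :: "'a::real_normed_vector \<Rightarrow> real"
  assumes sol: "ode_solution f y T" and "0 \<le> T"
    and inside: "\<And>t. t \<in> {0..T} \<Longrightarrow> norm (y t) \<le> r"
    and deriv: "\<And>y. norm y \<le> r \<Longrightarrow> (V has_derivative V' y) (at y)"
    and nonpos: "\<And>y. norm y \<le> r \<Longrightarrow> V' y (f y) \<le> 0"
  shows "V (y T) \<le> V (y 0)"
proof -
  have "- V (y 0) \<le> - V (y T)"
  proof (rule ode_solution_lyapunov_mono[OF sol \<open>0 \<le> T\<close>, where V' = "\<lambda>y h. - V' y h"])
    fix t assume "t \<in> {0..T}"
    then show "((\<lambda>y. - V y) has_derivative (\<lambda>h. - V' (y t) h)) (at (y t))"
      and "0 \<le> - V' (y t) (f (y t))"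
      using deriv nonpos inside by (auto intro: has_derivative_minus)
  qed
  then show ?thesis by simp
qed

lemma lyapunov_stays_in_ball:
  fixes f :: "'a::real_normed_vector \<Rightarrow> 'a" and V :: "'a \<Rightarrow> real"
  assumes "c1 > 0" "c2 > 0"
    and bounds: "\<And>y. norm y \<le> r \<Longrightarrow> c1 * (norm y)^2 \<le> V y \<and> V y \<le> c2 * (norm y)^2"
    and deriv: "\<And>y. norm y \<le> r \<Longrightarrow> (V has_derivative V' y) (at y)"
    and nonpos: "\<And>y. norm y \<le> r \<Longrightarrow> V' y (f y) \<le> 0"
    and e: "0 < e" "e \<le> r"
  obtains \<eta> where "\<eta> > 0"
    "\<And>y T t. ode_solution f y T \<Longrightarrow> norm (y 0) < \<eta> \<Longrightarrow> t \<in> {0..T} \<Longrightarrow> norm (y t) < e"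
proof -
  define \<eta> where "\<eta> = e * sqrt (c1 / (c1 + c2))"
  have "sqrt (c1 / (c1 + c2)) < 1" using \<open>c1 > 0\<close> \<open>c2 > 0\<close> by simp
  then have "\<eta> > 0" "\<eta> < e" unfolding \<eta>_def using e \<open>c1 > 0\<close> \<open>c2 > 0\<close> by auto
  have "c2 * \<eta>^2 = c1 * e^2 * (c2 / (c1 + c2))"
    unfolding \<eta>_def using \<open>c1 > 0\<close> \<open>c2 > 0\<close> by (simp add: power_mult_distrib)
  also have "\<dots> < c1 * e^2 * 1"
    using \<open>c1 > 0\<close> \<open>c2 > 0\<close> e by (intro mult_strict_left_mono) auto
  finally have \<eta>_small: "c2 * \<eta>^2 < c1 * e^2" by simp
  have "norm (y t) < e" if sol: "ode_solution f y T" and y0: "norm (y 0) < \<eta>" and t: "t \<in> {0..T}"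
    for y T t
  proof (rule ccontr)
    assume "\<not> norm (y t) < e"
    then have "e \<le> norm (y t)" by simp
    moreover have "continuous_on {0..T} (\<lambda>s. norm (y s))"
      using ode_solution_continuous_on[OF sol] by (intro continuous_on_norm)
    moreover have "norm (y 0) < e" using y0 \<open>\<eta> < e\<close> by simp
    ultimately obtain \<tau> where \<tau>: "\<tau> \<in> {0..T}" "norm (y \<tau>) = e" "\<And>s. s \<in> {0..\<tau>} \<Longrightarrow> norm (y s) \<le> e"
      using continuous_on_first_crossing[of T "\<lambda>s. norm (y s)" e t] t by blast
    have "V (y \<tau>) \<le> V (y 0)"
      by (rule lyapunov_nonincreasing[OF ode_solution_restrict[OF sol] _ _ deriv nonpos])
        (use \<tau> e in force)+
    moreover have "c1 * e^2 \<le> V (y \<tau>)" using bounds[of "y \<tau>"] \<tau> e by auto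
    moreover have "V (y 0) \<le> c2 * (norm (y 0))^2" using bounds[of "y 0"] y0 \<open>\<eta> < e\<close> e by simp
    moreover have "c2 * (norm (y 0))^2 \<le> c2 * \<eta>^2"
      using y0 \<open>c2 > 0\<close> by (intro mult_left_mono power_mono) auto
    ultimately show False using \<eta>_small by linarith
  qed
  with \<open>\<eta> > 0\<close> show thesis by (rule that)
qed

lemma lyapunov_lyap_stable:
  fixes f :: "'a::real_normed_vector \<Rightarrow> 'a" and V :: "'a \<Rightarrow> real"
  assumes "f 0 = 0" "r > 0" "c1 > 0" "c2 > 0"
    and bounds: "\<And>y. norm y \<le> r \<Longrightarrow> c1 * (norm y)^2 \<le> V y \<and> V y \<le> c2 * (norm y)^2"
    and deriv: "\<And>y. norm y \<le> r \<Longrightarrow> (V has_derivative V' y) (at y)"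
    and nonpos: "\<And>y. norm y \<le> r \<Longrightarrow> V' y (f y) \<le> 0"
  shows "lyap_stable f 0"
  unfolding lyap_stable_def
proof (intro conjI \<open>f 0 = 0\<close> allI impI)
  fix \<epsilon> :: real assume "\<epsilon> > 0"
  obtain \<eta> where "\<eta> > 0" and \<eta>:
    "\<And>y T t. ode_solution f y T \<Longrightarrow> norm (y 0) < \<eta> \<Longrightarrow> t \<in> {0..T} \<Longrightarrow> norm (y t) < min \<epsilon> r"
    by (rule lyapunov_stays_in_ball[OF \<open>c1 > 0\<close> \<open>c2 > 0\<close> bounds deriv nonpos, where e = "min \<epsilon> r"])
      (use \<open>\<epsilon> > 0\<close> \<open>r > 0\<close> in auto)
  show "\<exists>\<eta>>0. \<forall>y T. ode_solution f y T \<and> dist (y 0) 0 < \<eta> \<longrightarrow> (\<forall>t\<in>{0..T}. dist (y t) 0 < \<epsilon>)"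
  proof (intro exI[of _ \<eta>] conjI allI impI ballI \<open>\<eta> > 0\<close>)
    fix y T t assume "ode_solution f y T \<and> dist (y 0) 0 < \<eta>" "t \<in> {0..T}"
    then show "dist (y t) 0 < \<epsilon>" using \<eta>[of y T t] by simp
  qed
qed

lemma lyapunov_exponential_decay:
  fixes V :: "'a::real_normed_vector \<Rightarrow> real"
  assumes sol: "ode_solution f y T" and "0 \<le> T"
    and deriv: "\<And>t. t \<in> {0..T} \<Longrightarrow> (V has_derivative V' (y t)) (at (y t))"
    and decay: "\<And>t. t \<in> {0..T} \<Longrightarrow> V' (y t) (f (y t)) \<le> - c * V (y t)"
  shows "V (y T) \<le> exp (- c * T) * V (y 0)"
proof -
  have "- (exp (c * 0) * V (y 0)) \<le> - (exp (c * T) * V (y T))"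
  proof (rule deriv_nonneg_imp_mono_within[OF \<open>0 \<le> T\<close>])
    fix t assume t: "t \<in> {0..T}"
    show "((\<lambda>t. - (exp (c * t) * V (y t))) has_real_derivative
        - exp (c * t) * (c * V (y t) + V' (y t) (f (y t)))) (at t within {0..T})"
      using ode_solution_comp_has_real_derivative[OF sol t deriv[OF t]]
      by (auto intro!: derivative_eq_intros simp: algebra_simps)
    have "c * V (y t) + V' (y t) (f (y t)) \<le> 0" using decay[OF t] by simp
    then show "0 \<le> - exp (c * t) * (c * V (y t) + V' (y t) (f (y t)))"
      by (simp add: mult_le_0_iff)
  qed
  then have "exp (- c * T) * (exp (c * T) * V (y T)) \<le> exp (- c * T) * V (y 0)"
    by (intro mult_left_mono) auto
  then show ?thesis by (simp add: mult.assoc[symmetric] exp_add[symmetric])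
qed

lemma tendsto_sqrt_exp_decay:
  assumes "c > 0"
  shows "((\<lambda>t. sqrt (exp (- c * t) * K)) \<longlongrightarrow> 0) at_top"
proof -
  have "filterlim (\<lambda>t. c * t) at_top at_top"
    using assms by (intro filterlim_tendsto_pos_mult_at_top[OF tendsto_const] filterlim_ident)
  then have "filterlim (\<lambda>t. - c * t) at_bot at_top"
    by (simp add: filterlim_uminus_at_bot)
  from tendsto_real_sqrt[OF tendsto_mult_left_zero[OF filterlim_compose[OF exp_at_bot this]]]
  show ?thesis by (simp only: real_sqrt_zero)
qed

lemma lyapunov_attractive:
  fixes V :: "'a::real_normed_vector \<Rightarrow> real"
  assumes sol: "\<forall>T\<ge>0. ode_solution f y T" and inside: "\<And>t. t \<ge> 0 \<Longrightarrow> norm (y t) \<le> r"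
    and "c1 > 0" "c > 0"
    and lower: "\<And>y. norm y \<le> r \<Longrightarrow> c1 * (norm y)^2 \<le> V y"
    and deriv: "\<And>y. norm y \<le> r \<Longrightarrow> (V has_derivative V' y) (at y)"
    and decay: "\<And>y. norm y \<le> r \<Longrightarrow> V' y (f y) \<le> - c * V y"
  shows "(y \<longlongrightarrow> 0) at_top"
proof (rule tendsto_norm_zero_cancel[OF Lim_null_comparison])
  have "norm (y t) \<le> sqrt (exp (- c * t) * (V (y 0) / c1))" if "t \<ge> 0" for t
  proof -
    have "V (y t) \<le> exp (- c * t) * V (y 0)"
    proof (rule lyapunov_exponential_decay[OF sol[rule_format, OF that] that])
      fix s assume "s \<in> {0..t}"
      then have "norm (y s) \<le> r" using inside by simp
      then show "(V has_derivative V' (y s)) (at (y s))" "V' (y s) (f (y s)) \<le> - c * V (y s)"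
        by (rule deriv, rule decay)
    qed
    moreover have "c1 * (norm (y t))^2 \<le> V (y t)" using lower inside[OF that] by simp
    ultimately have "(norm (y t))^2 \<le> exp (- c * t) * (V (y 0) / c1)"
      using \<open>c1 > 0\<close> by (simp add: field_simps)
    then show ?thesis by (simp add: real_le_rsqrt)
  qed
  then show "\<forall>\<^sub>F t in at_top. norm (norm (y t)) \<le> sqrt (exp (- c * t) * (V (y 0) / c1))"
    by (auto intro: eventually_at_top_linorderI[of 0])
  show "((\<lambda>t. sqrt (exp (- c * t) * (V (y 0) / c1))) \<longlongrightarrow> 0) at_top"
    using \<open>c > 0\<close> by (rule tendsto_sqrt_exp_decay)
qed

lemma lyapunov_loc_asym_stable:
  fixes f :: "'a::real_normed_vector \<Rightarrow> 'a" and V :: "'a \<Rightarrow> real"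
  assumes "f 0 = 0" "r > 0" "c1 > 0" "c2 > 0" "c3 > 0"
    and bounds: "\<And>y. norm y \<le> r \<Longrightarrow> c1 * (norm y)^2 \<le> V y \<and> V y \<le> c2 * (norm y)^2"
    and deriv: "\<And>y. norm y \<le> r \<Longrightarrow> (V has_derivative V' y) (at y)"
    and decrease: "\<And>y. norm y \<le> r \<Longrightarrow> V' y (f y) \<le> - c3 * (norm y)^2"
  shows "loc_asym_stable f 0"
proof -
  have decay: "V' y (f y) \<le> - (c3 / c2) * V y" if "norm y \<le> r" for y
  proof -
    have "(c3 / c2) * V y \<le> (c3 / c2) * (c2 * (norm y)^2)"
      using bounds[OF that] \<open>c2 > 0\<close> \<open>c3 > 0\<close> by (intro mult_left_mono) auto
    then show ?thesis using decrease[OF that] \<open>c2 > 0\<close> by simp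
  qed
  have nonpos: "V' y (f y) \<le> 0" if "norm y \<le> r" for y
  proof -
    have "0 \<le> c3 * (norm y)^2" using \<open>c3 > 0\<close> by simp
    then show ?thesis using decrease[OF that] by simp
  qed
  obtain \<eta> where "\<eta> > 0" and \<eta>:
    "\<And>y T t. ode_solution f y T \<Longrightarrow> norm (y 0) < \<eta> \<Longrightarrow> t \<in> {0..T} \<Longrightarrow> norm (y t) < r"
    by (rule lyapunov_stays_in_ball[OF \<open>c1 > 0\<close> \<open>c2 > 0\<close> bounds deriv nonpos, where e = r])
      (use \<open>r > 0\<close> in auto)
  have "(y \<longlongrightarrow> 0) at_top" if sol: "\<forall>T\<ge>0. ode_solution f y T" and y0: "norm (y 0) < \<eta>" for y
  proof (rule lyapunov_attractive[OF sol _ \<open>c1 > 0\<close> _ _ deriv decay])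
    show "norm (y t) \<le> r" if "t \<ge> 0" for t
      using \<eta>[of y t t] sol y0 that by (simp add: less_imp_le)
    show "c3 / c2 > 0" using \<open>c2 > 0\<close> \<open>c3 > 0\<close> by simp
    show "c1 * (norm u)^2 \<le> V u" if "norm u \<le> r" for u using bounds[OF that] by simp
  qed
  then show ?thesis
    unfolding loc_asym_stable_def
    using lyapunov_lyap_stable[OF assms(1-4) bounds deriv nonpos] \<open>\<eta> > 0\<close> by auto
qed

section \<open>Solutions of globally Lipschitz equations\<close>

lemma has_integral_exp_scaled:
  fixes K d \<tau> :: real
  assumes "0 \<le> \<tau>"
  shows "((\<lambda>s. K * exp (2 * K * s) * d) has_integral d * (exp (2 * K * \<tau>) - 1) / 2) {0..\<tau>}"
proof -
  have "((\<lambda>s. K * exp (2 * K * s) * d) has_integral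
      (\<lambda>s. d * exp (2 * K * s) / 2) \<tau> - (\<lambda>s. d * exp (2 * K * s) / 2) 0) {0..\<tau>}"
  proof (rule fundamental_theorem_of_calculus[OF assms])
    fix s assume "s \<in> {0..\<tau>}"
    have "((\<lambda>s. d * exp (2 * K * s) / 2) has_real_derivative d * (exp (2 * K * s) * (2 * K)) / 2)
        (at s within {0..\<tau>})"
      by (auto intro!: derivative_eq_intros)
    then show "((\<lambda>s. d * exp (2 * K * s) / 2) has_vector_derivative K * exp (2 * K * s) * d)
        (at s within {0..\<tau>})"
      unfolding has_real_derivative_iff_has_vector_derivative[symmetric]
      by (rule DERIV_cong) (simp add: algebra_simps)
  qed
  then show ?thesis by (simp add: right_diff_distrib diff_divide_distrib)
qed

lemma norm_integral_exp_scaled_diff: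
  fixes g :: "'a::euclidean_space \<Rightarrow> 'a" and u v :: "real \<Rightarrow> 'a"
  assumes lip: "K-lipschitz_on UNIV g" and "0 \<le> \<tau>"
    and cont: "continuous_on {0..\<tau>} u" "continuous_on {0..\<tau>} v"
    and close: "\<And>s. s \<in> {0..\<tau>} \<Longrightarrow> dist (u s) (v s) \<le> d"
  shows "norm (integral {0..\<tau>} (\<lambda>s. g (exp (2 * K * s) *\<^sub>R u s))
           - integral {0..\<tau>} (\<lambda>s. g (exp (2 * K * s) *\<^sub>R v s))) \<le> d * (exp (2 * K * \<tau>) - 1) / 2"
proof -
  have integrable: "(\<lambda>s. g (exp (2 * K * s) *\<^sub>R w s)) integrable_on {0..\<tau>}"
    if "continuous_on {0..\<tau>} w" for w :: "real \<Rightarrow> 'a"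
  proof (rule integrable_continuous_real)
    have "continuous_on {0..\<tau>} (\<lambda>s. exp (2 * K * s) *\<^sub>R w s)"
      by (intro continuous_intros that)
    then show "continuous_on {0..\<tau>} (\<lambda>s. g (exp (2 * K * s) *\<^sub>R w s))"
      by (rule continuous_on_compose2[OF lipschitz_on_continuous_on[OF lip]]) auto
  qed
  have pointwise: "norm (g (exp (2 * K * s) *\<^sub>R u s) - g (exp (2 * K * s) *\<^sub>R v s)) \<le> K * exp (2 * K * s) * d"
    if "s \<in> {0..\<tau>}" for s
  proof -
    have "norm (g (exp (2 * K * s) *\<^sub>R u s) - g (exp (2 * K * s) *\<^sub>R v s))
        \<le> K * dist (exp (2 * K * s) *\<^sub>R u s) (exp (2 * K * s) *\<^sub>R v s)"
      using lipschitz_onD[OF lip] by (simp add: dist_norm)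
    also have "\<dots> = K * exp (2 * K * s) * dist (u s) (v s)"
      by (simp add: dist_norm scaleR_diff_right[symmetric])
    also have "\<dots> \<le> K * exp (2 * K * s) * d"
      using close[OF that] lipschitz_on_nonneg[OF lip] by (intro mult_left_mono) auto
    finally show ?thesis .
  qed
  have "norm (integral {0..\<tau>} (\<lambda>s. g (exp (2 * K * s) *\<^sub>R u s))
           - integral {0..\<tau>} (\<lambda>s. g (exp (2 * K * s) *\<^sub>R v s)))
      = norm (integral {0..\<tau>} (\<lambda>s. g (exp (2 * K * s) *\<^sub>R u s) - g (exp (2 * K * s) *\<^sub>R v s)))"
    by (simp add: integral_diff[OF integrable[OF cont(1)] integrable[OF cont(2)]])
  also have "\<dots> \<le> integral {0..\<tau>} (\<lambda>s. K * exp (2 * K * s) * d)"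
    by (rule integral_norm_bound_integral[OF integrable_diff[OF integrable[OF cont(1)] integrable[OF cont(2)]]
        _ pointwise]) (auto intro!: integrable_continuous_real continuous_intros)
  also have "\<dots> = d * (exp (2 * K * \<tau>) - 1) / 2"
    using has_integral_exp_scaled[OF \<open>0 \<le> \<tau>\<close>] by (rule integral_unique)
  finally show ?thesis .
qed

(* The Picard operator of y' = g y in the weighted variable v t = exp (-2Kt) y t (Bielecki);
   the weight turns a K-Lipschitz g into a contraction with constant 1/2, on any interval. *)
definition bielecki_picard :: "('a::euclidean_space \<Rightarrow> 'a) \<Rightarrow> real \<Rightarrow> 'a \<Rightarrow> (real \<Rightarrow> 'a) \<Rightarrow> real \<Rightarrow> 'a" where
  "bielecki_picard g K y0 v \<tau> =
     exp (- (2 * K * \<tau>)) *\<^sub>R (y0 + integral {0..\<tau>} (\<lambda>s. g (exp (2 * K * s) *\<^sub>R v s)))"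

lemma bielecki_picard_contraction:
  fixes g :: "'a::euclidean_space \<Rightarrow> 'a"
  assumes lip: "K-lipschitz_on UNIV g" and "0 \<le> \<tau>"
    and cont: "continuous_on {0..\<tau>} u" "continuous_on {0..\<tau>} v"
    and close: "\<And>s. s \<in> {0..\<tau>} \<Longrightarrow> dist (u s) (v s) \<le> d"
  shows "dist (bielecki_picard g K y0 u \<tau>) (bielecki_picard g K y0 v \<tau>) \<le> d / 2"
proof -
  have "0 \<le> dist (u 0) (v 0)" by simp
  also have "\<dots> \<le> d" using close[of 0] \<open>0 \<le> \<tau>\<close> by simp
  finally have "d \<ge> 0" .
  have "dist (bielecki_picard g K y0 u \<tau>) (bielecki_picard g K y0 v \<tau>)
      = exp (- (2 * K * \<tau>)) * norm (integral {0..\<tau>} (\<lambda>s. g (exp (2 * K * s) *\<^sub>R u s))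
           - integral {0..\<tau>} (\<lambda>s. g (exp (2 * K * s) *\<^sub>R v s)))"
    unfolding bielecki_picard_def dist_norm by (simp add: scaleR_diff_right[symmetric])
  also have "\<dots> \<le> exp (- (2 * K * \<tau>)) * (d * (exp (2 * K * \<tau>) - 1) / 2)"
    by (intro mult_left_mono norm_integral_exp_scaled_diff[OF lip \<open>0 \<le> \<tau>\<close> cont close]) auto
  also have "\<dots> = d * (1 - exp (- (2 * K * \<tau>))) / 2"
    by (simp add: algebra_simps exp_minus field_simps)
  also have "\<dots> \<le> d / 2" using \<open>d \<ge> 0\<close> by (simp add: mult_left_le)
  finally show ?thesis .
qed

lemma continuous_on_bielecki_picard:
  fixes g :: "'a::euclidean_space \<Rightarrow> 'a"
  assumes "K-lipschitz_on UNIV g" "continuous_on UNIV v"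
  shows "continuous_on {0..T} (bielecki_picard g K y0 v)"
proof -
  have "continuous_on {0..T} (\<lambda>s. g (exp (2 * K * s) *\<^sub>R v s))"
    by (rule continuous_on_compose2[OF lipschitz_on_continuous_on[OF assms(1)]])
      (auto intro!: continuous_intros continuous_on_subset[OF assms(2)])
  then have "continuous_on {0..T} (\<lambda>\<tau>. integral {0..\<tau>} (\<lambda>s. g (exp (2 * K * s) *\<^sub>R v s)))"
    by (rule continuous_on_vector_derivative[OF integral_has_vector_derivative])
  then show ?thesis unfolding bielecki_picard_def by (intro continuous_intros)
qed

lemma bcontfun_clamp:
  fixes T :: real
  assumes "continuous_on {0..T} h" "0 \<le> T"
  shows "(\<lambda>t. h (max 0 (min T t))) \<in> bcontfun"
proof -
  have clamp: "max 0 (min T t) \<in> {0..T}" for t using \<open>0 \<le> T\<close> by auto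
  have "bounded (h ` {0..T})"
    by (intro compact_imp_bounded compact_continuous_image assms(1)) simp
  then have "bounded (range (\<lambda>t. h (max 0 (min T t))))"
    by (rule bounded_subset) (use clamp in auto)
  moreover have "continuous_on UNIV (\<lambda>t. max 0 (min T t))" by (intro continuous_intros)
  then have "continuous_on UNIV (\<lambda>t. h (max 0 (min T t)))"
    by (rule continuous_on_compose2[OF assms(1)]) (use clamp in blast)
  ultimately show ?thesis unfolding bcontfun_def by simp
qed

lemma lipschitz_ode_solution_exists:
  fixes g :: "'a::euclidean_space \<Rightarrow> 'a"
  assumes lip: "L-lipschitz_on UNIV g" and "0 \<le> T"
  obtains y where "y 0 = y0" "ode_solution g y T"
proof -
  define \<Phi> where "\<Phi> v = Bcontfun (\<lambda>t. bielecki_picard g L y0 (apply_bcontfun v) (max 0 (min T t)))" for v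
  have \<Phi>: "apply_bcontfun (\<Phi> v) t = bielecki_picard g L y0 (apply_bcontfun v) (max 0 (min T t))" for v t
    unfolding \<Phi>_def
    using bcontfun_clamp[OF continuous_on_bielecki_picard[OF lip continuous_on_apply_bcontfun] \<open>0 \<le> T\<close>]
    by (simp add: Bcontfun_inverse)
  have "dist (\<Phi> v1) (\<Phi> v2) \<le> 1/2 * dist v1 v2" for v1 v2
    using bielecki_picard_contraction[OF lip _ continuous_on_apply_bcontfun continuous_on_apply_bcontfun
        dist_bounded] \<open>0 \<le> T\<close>
    by (intro dist_bound) (simp add: \<Phi>)
  then obtain v where v: "\<Phi> v = v"
    using Banach_fix[OF complete_UNIV UNIV_not_empty, of "1/2" \<Phi>] by auto
  define G where "G s = g (exp (2 * L * s) *\<^sub>R apply_bcontfun v s)" for s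
  define y where "y t = y0 + integral {0..t} G" for t
  have y_v: "y t = exp (2 * L * t) *\<^sub>R apply_bcontfun v t" if "t \<in> {0..T}" for t
    using \<Phi>[of v t] that unfolding v bielecki_picard_def y_def G_def by (simp add: exp_minus)
  have "continuous_on {0..T} G"
    unfolding G_def
    by (rule continuous_on_compose2[OF lipschitz_on_continuous_on[OF lip]])
      (auto intro!: continuous_intros continuous_on_apply_bcontfun)
  then have "(y has_vector_derivative g (y t)) (at t within {0..T})" if t: "t \<in> {0..T}" for t
  proof -
    have "(y has_vector_derivative 0 + G t) (at t within {0..T})"
      unfolding y_def by (intro derivative_intros integral_has_vector_derivative \<open>continuous_on {0..T} G\<close> t)
    then show ?thesis unfolding G_def y_v[OF t] by simp
  qed
  moreover have "y 0 = y0" unfolding y_def by simp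
  ultimately show thesis using that unfolding ode_solution_def by blast
qed

lemma lipschitz_on_closest_point_extension:
  fixes f :: "'a::euclidean_space \<Rightarrow> 'b::metric_space"
  assumes lip: "L-lipschitz_on S f" and S: "convex S" "closed S" "S \<noteq> {}"
  shows "L-lipschitz_on UNIV (\<lambda>u. f (closest_point S u))"
proof (rule lipschitz_onI)
  fix u v :: 'a
  have "dist (f (closest_point S u)) (f (closest_point S v)) \<le> L * dist (closest_point S u) (closest_point S v)"
    using lipschitz_onD[OF lip] closest_point_in_set[OF S(2,3)] by blast
  also have "\<dots> \<le> L * dist u v"
    by (intro mult_left_mono closest_point_lipschitz S lipschitz_on_nonneg[OF lip])
  finally show "dist (f (closest_point S u)) (f (closest_point S v)) \<le> L * dist u v" .
qed (rule lipschitz_on_nonneg[OF lip])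

section \<open>Chetaev-type instability\<close>

lemma lyapunov_linear_growth:
  fixes V :: "'a::real_normed_vector \<Rightarrow> real"
  assumes sol: "ode_solution f y T" and "0 \<le> T" and "c2 > 0" "c3 \<ge> 0"
    and inside: "\<And>t. t \<in> {0..T} \<Longrightarrow> norm (y t) \<le> r"
    and upper: "\<And>y. norm y \<le> r \<Longrightarrow> V y \<le> c2 * (norm y)^2"
    and deriv: "\<And>y. norm y \<le> r \<Longrightarrow> (V has_derivative V' y) (at y)"
    and increase: "\<And>y. norm y \<le> r \<Longrightarrow> V' y (f y) \<ge> c3 * (norm y)^2"
  shows "V (y 0) + c3 / c2 * V (y 0) * T \<le> V (y T)"
proof -
  have rate: "V' (y t) (f (y t)) \<ge> c3 / c2 * V (y t)" if "t \<in> {0..T}" for t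
  proof -
    have "c3 / c2 * V (y t) \<le> c3 / c2 * (c2 * (norm (y t))^2)"
      using upper[OF inside[OF that]] \<open>c2 > 0\<close> \<open>c3 \<ge> 0\<close> by (intro mult_left_mono) auto
    then show ?thesis using increase[OF inside[OF that]] \<open>c2 > 0\<close> by simp
  qed
  have grows: "V (y 0) \<le> V (y t)" if "t \<in> {0..T}" for t
  proof (rule ode_solution_lyapunov_mono[OF ode_solution_restrict[OF sol]])
    fix s assume "s \<in> {0..t}"
    then have "s \<in> {0..T}" using that by auto
    moreover have "0 \<le> c3 * (norm (y s))^2" using \<open>c3 \<ge> 0\<close> by simp
    ultimately show "(V has_derivative V' (y s)) (at (y s))" "0 \<le> V' (y s) (f (y s))"
      using deriv[OF inside] increase[OF inside] by force+
  qed (use that in auto)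
  have "V (y 0) - c3 / c2 * V (y 0) * 0 \<le> V (y T) - c3 / c2 * V (y 0) * T"
  proof (rule deriv_nonneg_imp_mono_within[OF \<open>0 \<le> T\<close>])
    fix t assume t: "t \<in> {0..T}"
    show "((\<lambda>t. V (y t) - c3 / c2 * V (y 0) * t) has_real_derivative
        V' (y t) (f (y t)) - c3 / c2 * V (y 0)) (at t within {0..T})"
      using ode_solution_comp_has_real_derivative[OF sol t deriv[OF inside[OF t]]] \<open>c2 > 0\<close>
      by (auto intro!: derivative_eq_intros)
    have "c3 / c2 * V (y 0) \<le> c3 / c2 * V (y t)"
      using grows[OF t] \<open>c2 > 0\<close> \<open>c3 \<ge> 0\<close> by (intro mult_left_mono) auto
    then show "0 \<le> V' (y t) (f (y t)) - c3 / c2 * V (y 0)" using rate[OF t] by simp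
  qed
  then show ?thesis by simp
qed

lemma lyap_stable_modified_solutions_stay:
  fixes f g :: "'a::real_normed_vector \<Rightarrow> 'a"
  assumes "lyap_stable f 0" "r > 0" and agree: "\<And>u. norm u \<le> r \<Longrightarrow> g u = f u"
  obtains \<eta> where "\<eta> > 0"
    "\<And>y T t. ode_solution g y T \<Longrightarrow> norm (y 0) < \<eta> \<Longrightarrow> t \<in> {0..T} \<Longrightarrow> norm (y t) < r"
proof -
  obtain \<eta> where "\<eta> > 0" and
    "\<forall>y T. ode_solution f y T \<and> dist (y 0) 0 < \<eta> \<longrightarrow> (\<forall>t\<in>{0..T}. dist (y t) 0 < r)"
    using assms(1,2) unfolding lyap_stable_def by blast
  then have stable: "norm (y t) < r" if "ode_solution f y T" "norm (y 0) < \<eta>" "t \<in> {0..T}" for y T t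
    using that by simp
  have "norm (y t) < r" if sol: "ode_solution g y T" and y0: "norm (y 0) < min \<eta> r" and t: "t \<in> {0..T}"
    for y T t
  proof (rule ccontr)
    assume "\<not> norm (y t) < r"
    then have "r \<le> norm (y t)" by simp
    moreover have "continuous_on {0..T} (\<lambda>s. norm (y s))"
      using ode_solution_continuous_on[OF sol] by (intro continuous_on_norm)
    moreover have "norm (y 0) < r" using y0 by simp
    ultimately obtain \<tau> where \<tau>: "\<tau> \<in> {0..T}" "norm (y \<tau>) = r" "\<And>s. s \<in> {0..\<tau>} \<Longrightarrow> norm (y s) \<le> r"
      using continuous_on_first_crossing[of T "\<lambda>s. norm (y s)" r t] t by blast
    have "ode_solution f y \<tau>"
      by (rule ode_solution_cong[OF ode_solution_restrict[OF sol]]) (use \<tau> agree in auto)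
    then have "norm (y \<tau>) < r" using stable[of y \<tau> \<tau>] y0 \<tau> by simp
    then show False using \<tau>(2) by simp
  qed
  moreover have "min \<eta> r > 0" using \<open>\<eta> > 0\<close> \<open>r > 0\<close> by simp
  ultimately show thesis using that by blast
qed

lemma lyapunov_eq_unstable:
  fixes f :: "'a::euclidean_space \<Rightarrow> 'a" and V :: "'a \<Rightarrow> real"
  assumes "f 0 = 0" "r > 0" "c2 > 0" "c3 > 0"
    and lip: "L-lipschitz_on (cball 0 r) f"
    and upper: "\<And>y. norm y \<le> r \<Longrightarrow> V y \<le> c2 * (norm y)^2"
    and deriv: "\<And>y. norm y \<le> r \<Longrightarrow> (V has_derivative V' y) (at y)"
    and increase: "\<And>y. norm y \<le> r \<Longrightarrow> V' y (f y) \<ge> c3 * (norm y)^2"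
    and positive: "\<And>\<eta>. \<eta> > 0 \<Longrightarrow> \<exists>y. norm y < \<eta> \<and> V y > 0"
  shows "eq_unstable f 0"
  unfolding eq_unstable_def
proof (intro conjI \<open>f 0 = 0\<close> notI)
  assume "lyap_stable f 0"
  (* Projecting onto the ball extends f to a globally Lipschitz field g, whose solutions exist;
     stability of f keeps those starting near 0 inside the ball, where they solve y' = f y. *)
  define g where "g u = f (closest_point (cball 0 r) u)" for u
  have agree: "g u = f u" if "norm u \<le> r" for u
    unfolding g_def using that by (simp add: closest_point_self)
  obtain \<eta> where "\<eta> > 0" and stays:
    "\<And>y T t. ode_solution g y T \<Longrightarrow> norm (y 0) < \<eta> \<Longrightarrow> t \<in> {0..T} \<Longrightarrow> norm (y t) < r"
    using lyap_stable_modified_solutions_stay[OF \<open>lyap_stable f 0\<close> \<open>r > 0\<close> agree] by blast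
  obtain y0 where y0: "norm y0 < \<eta>" "V y0 > 0" using positive[OF \<open>\<eta> > 0\<close>] by blast
  define T where "T = c2 * r^2 / (c3 / c2 * V y0) + 1"
  have "T > 0" unfolding T_def using \<open>c2 > 0\<close> \<open>c3 > 0\<close> y0 by (simp add: add_nonneg_pos)
  have "L-lipschitz_on UNIV g"
    unfolding g_def using \<open>r > 0\<close> by (intro lipschitz_on_closest_point_extension lip) auto
  then obtain y where "y 0 = y0" and sol: "ode_solution g y T"
    by (rule lipschitz_ode_solution_exists[of L _ T y0]) (use \<open>T > 0\<close> in auto)
  have inside: "norm (y t) \<le> r" if "t \<in> {0..T}" for t
    using stays[OF sol _ that] y0 \<open>y 0 = y0\<close> by simp
  have "V y0 + c3 / c2 * V y0 * T \<le> V (y T)"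
    unfolding \<open>y 0 = y0\<close>[symmetric]
    by (rule lyapunov_linear_growth[OF ode_solution_cong[OF sol] _ \<open>c2 > 0\<close> _ inside upper deriv increase])
      (use \<open>T > 0\<close> \<open>c3 > 0\<close> agree inside in auto)
  also have "\<dots> \<le> c2 * (norm (y T))^2" using upper inside[of T] \<open>T > 0\<close> by simp
  also have "\<dots> \<le> c2 * r^2" using inside[of T] \<open>T > 0\<close> \<open>c2 > 0\<close> by (intro mult_left_mono power_mono) auto
  also have "\<dots> < c3 / c2 * V y0 * T"
    unfolding T_def using \<open>c2 > 0\<close> \<open>c3 > 0\<close> y0 by (simp add: field_simps)
  finally show False using y0 by simp
qed


section \<open>Bounded Lipschitz functions\<close>

definition bounded_lipschitz_on :: "'a::metric_space set \<Rightarrow> ('a \<Rightarrow> real) \<Rightarrow> bool" where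
  "bounded_lipschitz_on U h \<longleftrightarrow> (\<exists>L. L-lipschitz_on U h) \<and> (\<exists>M. \<forall>y\<in>U. \<bar>h y\<bar> \<le> M)"

lemma bounded_lipschitz_on_const: "bounded_lipschitz_on U (\<lambda>y. c)"
  unfolding bounded_lipschitz_on_def by (blast intro: lipschitz_on_constant)

lemma bounded_lipschitz_on_coordinate:
  assumes "bounded_linear h" "\<And>y. \<bar>h y\<bar> \<le> norm y"
  shows "bounded_lipschitz_on (cball 0 r) h"
  unfolding bounded_lipschitz_on_def
proof (intro conjI exI ballI lipschitz_onI)
  fix u v
  have "dist (h u) (h v) = \<bar>h (u - v)\<bar>"
    by (simp add: dist_real_def linear_diff[OF bounded_linear.linear[OF assms(1)]])
  also have "\<dots> \<le> 1 * dist u v" using assms(2) by (simp add: dist_norm)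
  finally show "dist (h u) (h v) \<le> 1 * dist u v" .
next
  fix y :: 'a assume "y \<in> cball 0 r"
  then show "\<bar>h y\<bar> \<le> r" using assms(2)[of y] by (simp add: dist_norm)
qed simp

lemma bounded_lipschitz_on_add:
  assumes "bounded_lipschitz_on U f" "bounded_lipschitz_on U g"
  shows "bounded_lipschitz_on U (\<lambda>y. f y + g y)"
proof -
  obtain L1 L2 M1 M2 where "L1-lipschitz_on U f" "L2-lipschitz_on U g"
    and "\<forall>y\<in>U. \<bar>f y\<bar> \<le> M1" "\<forall>y\<in>U. \<bar>g y\<bar> \<le> M2"
    using assms unfolding bounded_lipschitz_on_def by blast
  then have "(L1 + L2)-lipschitz_on U (\<lambda>y. f y + g y)" "\<forall>y\<in>U. \<bar>f y + g y\<bar> \<le> M1 + M2"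
    by (auto intro: lipschitz_on_add abs_triangle_ineq[THEN order_trans] add_mono)
  then show ?thesis unfolding bounded_lipschitz_on_def by blast
qed

lemma bounded_lipschitz_on_minus: "bounded_lipschitz_on U f \<Longrightarrow> bounded_lipschitz_on U (\<lambda>y. - f y)"
  unfolding bounded_lipschitz_on_def by (auto intro!: lipschitz_on_minus)

lemma bounded_lipschitz_on_diff:
  "bounded_lipschitz_on U f \<Longrightarrow> bounded_lipschitz_on U g \<Longrightarrow> bounded_lipschitz_on U (\<lambda>y. f y - g y)"
  using bounded_lipschitz_on_add[of U f "\<lambda>y. - g y"] bounded_lipschitz_on_minus[of U g] by simp

lemma bounded_lipschitz_on_mult:
  assumes "bounded_lipschitz_on U f" "bounded_lipschitz_on U g"
  shows "bounded_lipschitz_on U (\<lambda>y. f y * g y)"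
proof -
  obtain L1 L2 M1 M2 where l1: "L1-lipschitz_on U f" and l2: "L2-lipschitz_on U g"
    and m1: "\<forall>y\<in>U. \<bar>f y\<bar> \<le> M1" and m2: "\<forall>y\<in>U. \<bar>g y\<bar> \<le> M2"
    using assms unfolding bounded_lipschitz_on_def by blast
  have "(\<bar>M1\<bar> * L2 + \<bar>M2\<bar> * L1)-lipschitz_on U (\<lambda>y. f y * g y)"
  proof (rule lipschitz_onI)
    fix u v assume "u \<in> U" "v \<in> U"
    have "dist (f u * g u) (f v * g v) = \<bar>f u * (g u - g v) + g v * (f u - f v)\<bar>"
      by (simp add: dist_real_def algebra_simps)
    also have "\<dots> \<le> \<bar>f u\<bar> * \<bar>g u - g v\<bar> + \<bar>g v\<bar> * \<bar>f u - f v\<bar>"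
      by (rule abs_triangle_ineq[THEN order_trans]) (simp add: abs_mult)
    also have "\<dots> \<le> \<bar>M1\<bar> * (L2 * dist u v) + \<bar>M2\<bar> * (L1 * dist u v)"
      using lipschitz_onD[OF l1 \<open>u \<in> U\<close> \<open>v \<in> U\<close>] lipschitz_onD[OF l2 \<open>u \<in> U\<close> \<open>v \<in> U\<close>]
        m1 m2 \<open>u \<in> U\<close> \<open>v \<in> U\<close>
      by (intro add_mono mult_mono) (auto simp: dist_real_def)
    finally show "dist (f u * g u) (f v * g v) \<le> (\<bar>M1\<bar> * L2 + \<bar>M2\<bar> * L1) * dist u v"
      by (simp add: algebra_simps)
  qed (use lipschitz_on_nonneg[OF l1] lipschitz_on_nonneg[OF l2] in simp)
  moreover have "\<forall>y\<in>U. \<bar>f y * g y\<bar> \<le> M1 * M2"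
    using m1 m2 by (auto simp: abs_mult intro!: mult_mono)
  ultimately show ?thesis unfolding bounded_lipschitz_on_def by blast
qed

lemma bounded_lipschitz_on_inverse:
  assumes "bounded_lipschitz_on U h" "m > 0" "\<And>y. y \<in> U \<Longrightarrow> h y \<ge> m"
  shows "bounded_lipschitz_on U (\<lambda>y. 1 / h y)"
proof -
  obtain L where l: "L-lipschitz_on U h" using assms(1) unfolding bounded_lipschitz_on_def by blast
  have "(L / (m * m))-lipschitz_on U (\<lambda>y. 1 / h y)"
  proof (rule lipschitz_onI)
    fix u v assume "u \<in> U" "v \<in> U"
    then have hu: "h u \<ge> m" and hv: "h v \<ge> m" using assms(3) by auto
    have "dist (1 / h u) (1 / h v) = \<bar>h v - h u\<bar> / (h u * h v)"
      using hu hv assms(2) by (simp add: dist_real_def field_simps abs_div)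
    also have "\<dots> \<le> \<bar>h v - h u\<bar> / (m * m)"
      using hu hv assms(2) by (intro divide_left_mono mult_mono) auto
    also have "\<dots> \<le> L * dist u v / (m * m)"
      using lipschitz_onD[OF l \<open>u \<in> U\<close> \<open>v \<in> U\<close>] assms(2)
      by (intro divide_right_mono) (auto simp: dist_real_def abs_minus_commute)
    finally show "dist (1 / h u) (1 / h v) \<le> L / (m * m) * dist u v" by simp
  qed (use lipschitz_on_nonneg[OF l] in simp)
  moreover have "\<forall>y\<in>U. \<bar>1 / h y\<bar> \<le> 1 / m"
  proof
    fix y assume "y \<in> U"
    then have "h y \<ge> m" by (rule assms(3))
    then show "\<bar>1 / h y\<bar> \<le> 1 / m" using assms(2) by (simp add: frac_le)
  qed
  ultimately show ?thesis unfolding bounded_lipschitz_on_def by blast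
qed

lemma bounded_lipschitz_on_divide:
  assumes "bounded_lipschitz_on U f" "bounded_lipschitz_on U h" "m > 0" "\<And>y. y \<in> U \<Longrightarrow> h y \<ge> m"
  shows "bounded_lipschitz_on U (\<lambda>y. f y / h y)"
  using bounded_lipschitz_on_mult[OF assms(1) bounded_lipschitz_on_inverse[OF assms(2-4)]] by simp

lemma bounded_lipschitz_on_power2: "bounded_lipschitz_on U f \<Longrightarrow> bounded_lipschitz_on U (\<lambda>y. (f y)^2)"
  using bounded_lipschitz_on_mult[of U f f] by (simp add: power2_eq_square)

section \<open>The SCPW field near the disease-free equilibrium\<close>

lemma norm_triple_squared: "(norm (w::real, x::real, z::real))^2 = w^2 + x^2 + z^2"
  by (simp add: norm_Pair)

lemma abs_le_norm_triple:
  fixes w x z :: real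
  shows "\<bar>w\<bar> \<le> norm (w, x, z)" "\<bar>x\<bar> \<le> norm (w, x, z)" "\<bar>z\<bar> \<le> norm (w, x, z)"
  using norm_fst_le[where x = w and y = "(x, z)"] norm_snd_le[where x = w and y = "(x, z)"]
    norm_fst_le[where x = x and y = z] norm_snd_le[where x = x and y = z]
  by auto

lemma abs_mult_le: "\<bar>a\<bar> \<le> A \<Longrightarrow> \<bar>b\<bar> \<le> B \<Longrightarrow> \<bar>a * b\<bar> \<le> A * B" for a b A B :: real
  by (simp add: abs_mult mult_mono')

lemma quadratic_form_lower_bound:
  fixes p q m x z :: real
  assumes "p > 0" "q > 0" "m^2 < 4 * p * q"
  shows "(4 * p * q - m^2) / (8 * (p + q)) * (x^2 + z^2) \<le> p * x^2 + m * x * z + q * z^2"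
proof -
  define d where "d = 4 * p * q - m^2"
  define Q where "Q = p * x^2 + m * x * z + q * z^2"
  have "d > 0" unfolding d_def using assms by simp
  have "4 * p * Q = (2 * p * x + m * z)^2 + d * z^2" "4 * q * Q = (2 * q * z + m * x)^2 + d * x^2"
    unfolding d_def Q_def by (simp_all add: algebra_simps power2_eq_square)
  then have dz: "d * z^2 \<le> 4 * p * Q" and dx: "d * x^2 \<le> 4 * q * Q" by simp_all
  have "0 \<le> d * z^2" using \<open>d > 0\<close> by simp
  then have "0 \<le> 4 * p * Q" using dz by linarith
  then have "0 \<le> Q" using \<open>p > 0\<close> by (simp add: zero_le_mult_iff)
  then have "4 * p * Q \<le> 4 * (p + q) * Q" "4 * q * Q \<le> 4 * (p + q) * Q"
    using assms by (intro mult_right_mono; simp)+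
  then have "d * (x^2 + z^2) \<le> 8 * (p + q) * Q"
    using dx dz by (simp add: algebra_simps)
  then show ?thesis
    unfolding d_def[symmetric] Q_def[symmetric] using assms by (simp add: field_simps)
qed

lemma scpw_field_zero: "scpw_field k1 \<alpha> \<beta> \<delta> 0 = 0"
  by (simp add: scpw_field_def zero_prod_def)

lemma scpw_field_lipschitz:
  assumes "r \<le> 1/4"
  obtains L where "L-lipschitz_on (cball 0 r) (scpw_field k1 \<alpha> \<beta> \<delta>)"
proof -
  let ?U = "cball (0::real \<times> real \<times> real) r"
  have abs_le_norm: "\<bar>fst y\<bar> \<le> norm y" "\<bar>fst (snd y)\<bar> \<le> norm y" "\<bar>snd (snd y)\<bar> \<le> norm y"
    for y :: "real \<times> real \<times> real"
    using abs_le_norm_triple[where w = "fst y" and x = "fst (snd y)" and z = "snd (snd y)"] by auto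
  have "bounded_linear (\<lambda>y::real \<times> real \<times> real. fst (snd y))"
    "bounded_linear (\<lambda>y::real \<times> real \<times> real. snd (snd y))"
    by (auto intro: bounded_linear_compose[of fst snd] bounded_linear_compose[of snd snd]
        bounded_linear_fst bounded_linear_snd)
  then have coordinates: "bounded_lipschitz_on ?U (\<lambda>y. fst y)"
    "bounded_lipschitz_on ?U (\<lambda>y. fst (snd y))" "bounded_lipschitz_on ?U (\<lambda>y. snd (snd y))"
    using abs_le_norm bounded_linear_fst by (auto intro: bounded_lipschitz_on_coordinate)
  have D1: "1 - fst (snd y) - snd (snd y) \<ge> 1/2" if "y \<in> ?U" for y
    using that abs_le_norm[of y] assms by (auto simp: dist_norm)
  then have D2: "(1 - fst (snd y) - snd (snd y))^2 \<ge> 1/4" if "y \<in> ?U" for y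
    using power_mono[OF D1[OF that], of 2] by (simp add: power2_eq_square)
  have "bounded_lipschitz_on ?U (\<lambda>y. 1 - fst (snd y) - snd (snd y))"
    by (intro bounded_lipschitz_on_diff bounded_lipschitz_on_const coordinates)
  note intros = bounded_lipschitz_on_add bounded_lipschitz_on_diff bounded_lipschitz_on_mult
    bounded_lipschitz_on_minus bounded_lipschitz_on_const bounded_lipschitz_on_power2
    bounded_lipschitz_on_divide[OF _ _ _ D2] bounded_lipschitz_on_divide[OF _ _ _ D1] coordinates this
  have "bounded_lipschitz_on ?U (\<lambda>y. fst (scpw_field k1 \<alpha> \<beta> \<delta> y))"
    "bounded_lipschitz_on ?U (\<lambda>y. fst (snd (scpw_field k1 \<alpha> \<beta> \<delta> y)))"
    "bounded_lipschitz_on ?U (\<lambda>y. snd (snd (scpw_field k1 \<alpha> \<beta> \<delta> y)))"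
    unfolding scpw_field_def case_prod_beta fst_conv snd_conv by (intro intros; simp)+
  then obtain L1 L2 L3 where "L1-lipschitz_on ?U (\<lambda>y. fst (scpw_field k1 \<alpha> \<beta> \<delta> y))"
    "L2-lipschitz_on ?U (\<lambda>y. fst (snd (scpw_field k1 \<alpha> \<beta> \<delta> y)))"
    "L3-lipschitz_on ?U (\<lambda>y. snd (snd (scpw_field k1 \<alpha> \<beta> \<delta> y)))"
    unfolding bounded_lipschitz_on_def by blast
  from lipschitz_on_Pair[OF this(1) lipschitz_on_Pair[OF this(2,3)]]
  show thesis by (intro that) simp
qed

lemma scpw_denominator_bounds:
  fixes x z \<rho> :: real
  assumes "\<rho> \<le> 1/4" "\<bar>x\<bar> \<le> \<rho>" "\<bar>z\<bar> \<le> \<rho>"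
  shows "1/2 \<le> 1 - x - z" "1 - x - z \<le> 3/2" "1 / (1 - x - z) \<le> 2" "1 / (1 - x - z)^2 \<le> 4"
proof -
  show D: "1/2 \<le> 1 - x - z" "1 - x - z \<le> 3/2" using assms by linarith+
  then show "1 / (1 - x - z) \<le> 2" "1 / (1 - x - z)^2 \<le> 4"
    using power_mono[OF D(1), of 2] by (simp_all add: field_simps power2_eq_square)
qed

lemma scpw_remainder_bounds:
  fixes w x z \<kappa> B \<rho> :: real
  defines "D \<equiv> 1 - x - z"
  assumes "\<rho> \<le> 1/4" and w: "\<bar>w\<bar> \<le> \<rho>" and x: "\<bar>x\<bar> \<le> \<rho>" and z: "\<bar>z\<bar> \<le> \<rho>"
  shows "\<bar>\<kappa> * x * ((1 - w) * (D - 2 * x) - D^2) / D^2 - 2 * B * x^2 / D\<bar> \<le> (28 * \<bar>\<kappa>\<bar> + 4 * \<bar>B\<bar>) * \<rho> * \<bar>x\<bar>"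
    and "\<bar>2 * \<kappa> * (1 - w) * x^2 / D^2 + 2 * B * x^2 / D\<bar> \<le> (28 * \<bar>\<kappa>\<bar> + 4 * \<bar>B\<bar>) * \<rho> * \<bar>x\<bar>"
proof -
  note D = scpw_denominator_bounds[OF assms(2) x z, folded D_def]
  have "0 \<le> \<rho>" using x by linarith
  have "\<bar>D * (x + z)\<bar> \<le> 3/2 * (2 * \<rho>)" by (rule abs_mult_le) (use D x z in linarith)+
  moreover have "\<bar>w * (D - 2 * x)\<bar> \<le> \<rho> * 2" by (rule abs_mult_le) (use w D x assms(2) in linarith)+
  moreover have "(1 - w) * (D - 2 * x) - D^2 = D * (x + z) - 2 * x - w * (D - 2 * x)"
    unfolding D_def by (simp add: algebra_simps power2_eq_square)
  ultimately have N: "\<bar>(1 - w) * (D - 2 * x) - D^2\<bar> \<le> 7 * \<rho>" using x by linarith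
  have "\<bar>x\<bar> * \<bar>x\<bar> \<le> \<rho> * \<bar>x\<bar>" by (rule mult_right_mono[OF x]) simp
  then have x2: "x^2 \<le> \<rho> * \<bar>x\<bar>" by (simp add: power2_eq_square)
  have "\<bar>\<kappa> * x * ((1 - w) * (D - 2 * x) - D^2) / D^2\<bar>
      = \<bar>\<kappa>\<bar> * \<bar>x\<bar> * \<bar>(1 - w) * (D - 2 * x) - D^2\<bar> * (1 / D^2)"
    by (simp add: abs_mult)
  also have "\<dots> \<le> \<bar>\<kappa>\<bar> * \<bar>x\<bar> * (7 * \<rho>) * 4" using N D by (intro mult_mono) auto
  finally have t1: "\<bar>\<kappa> * x * ((1 - w) * (D - 2 * x) - D^2) / D^2\<bar> \<le> 28 * \<bar>\<kappa>\<bar> * \<rho> * \<bar>x\<bar>"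
    by (simp add: mult_ac)
  have "\<bar>2 * B * x^2 / D\<bar> = 2 * \<bar>B\<bar> * x^2 * (1 / D)" using D by (simp add: abs_mult)
  also have "\<dots> \<le> 2 * \<bar>B\<bar> * (\<rho> * \<bar>x\<bar>) * 2" using x2 D \<open>0 \<le> \<rho>\<close> by (intro mult_mono) auto
  finally have t2: "\<bar>2 * B * x^2 / D\<bar> \<le> 4 * \<bar>B\<bar> * \<rho> * \<bar>x\<bar>" by simp
  have "\<bar>2 * \<kappa> * (1 - w) * x^2 / D^2\<bar> = 2 * \<bar>\<kappa>\<bar> * \<bar>1 - w\<bar> * x^2 * (1 / D^2)"
    by (simp add: abs_mult)
  also have "\<dots> \<le> 2 * \<bar>\<kappa>\<bar> * (3/2) * (\<rho> * \<bar>x\<bar>) * 4"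
    using x2 D w assms(2) \<open>0 \<le> \<rho>\<close> by (intro mult_mono) auto
  finally have t3: "\<bar>2 * \<kappa> * (1 - w) * x^2 / D^2\<bar> \<le> 12 * \<bar>\<kappa>\<bar> * \<rho> * \<bar>x\<bar>" by (simp add: mult_ac)
  have "0 \<le> \<bar>\<kappa>\<bar> * \<rho> * \<bar>x\<bar>" using x by simp
  moreover have "(28 * \<bar>\<kappa>\<bar> + 4 * \<bar>B\<bar>) * \<rho> * \<bar>x\<bar> = 28 * \<bar>\<kappa>\<bar> * \<rho> * \<bar>x\<bar> + 4 * \<bar>B\<bar> * \<rho> * \<bar>x\<bar>"
    by (simp add: algebra_simps)
  ultimately show "\<bar>\<kappa> * x * ((1 - w) * (D - 2 * x) - D^2) / D^2 - 2 * B * x^2 / D\<bar> \<le> (28 * \<bar>\<kappa>\<bar> + 4 * \<bar>B\<bar>) * \<rho> * \<bar>x\<bar>"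
    and "\<bar>2 * \<kappa> * (1 - w) * x^2 / D^2 + 2 * B * x^2 / D\<bar> \<le> (28 * \<bar>\<kappa>\<bar> + 4 * \<bar>B\<bar>) * \<rho> * \<bar>x\<bar>"
    using t1 t2 t3 abs_triangle_ineq4[of "\<kappa> * x * ((1 - w) * (D - 2 * x) - D^2) / D^2" "2 * B * x^2 / D"]
      abs_triangle_ineq[of "2 * \<kappa> * (1 - w) * x^2 / D^2" "2 * B * x^2 / D"]
    by linarith+
qed

definition scpw_linear :: "real \<Rightarrow> real \<Rightarrow> real \<Rightarrow> real \<times> real \<times> real \<Rightarrow> real \<times> real \<times> real" where
  "scpw_linear k1 a \<delta> = (\<lambda>(w, x, z). (k1 * \<delta> * x - w, a * x + z, 2 * \<delta> * x - 2 * z))"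

lemma scpw_field_minus_linear:
  fixes k1 \<alpha> \<beta> \<delta> w x z :: real
  defines "D \<equiv> 1 - x - z" and "\<kappa> \<equiv> \<alpha> * \<delta> / k1" and "B \<equiv> \<beta> * \<delta>"
  assumes "D \<noteq> 0"
  shows "scpw_field k1 \<alpha> \<beta> \<delta> (w, x, z) - scpw_linear k1 (\<kappa> + B - (\<delta> + 1)) \<delta> (w, x, z)
    = (0, \<kappa> * x * ((1 - w) * (D - 2 * x) - D^2) / D^2 - 2 * B * x^2 / D,
          2 * \<kappa> * (1 - w) * x^2 / D^2 + 2 * B * x^2 / D)"
proof -
  have e: "1 - 3 * x - z = D - 2 * x" "1 - x - z = D" "2 * \<alpha> * \<delta> / k1 = 2 * \<kappa>" "\<alpha> * \<delta> / k1 = \<kappa>"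
    "2 * \<beta> * \<delta> = 2 * B" "\<beta> * \<delta> = B"
    unfolding D_def \<kappa>_def B_def by simp_all
  show ?thesis
    unfolding scpw_field_def scpw_linear_def prod.case e using \<open>D \<noteq> 0\<close>
    by (simp add: field_simps power2_eq_square)
qed

lemma scpw_field_remainder:
  assumes "norm y \<le> 1/4"
  shows "norm (scpw_field k1 \<alpha> \<beta> \<delta> y - scpw_linear k1 (\<alpha> * \<delta> / k1 + \<beta> * \<delta> - (\<delta> + 1)) \<delta> y)
    \<le> (56 * \<bar>\<alpha> * \<delta> / k1\<bar> + 8 * \<bar>\<beta> * \<delta>\<bar>) * (norm y)^2"
proof -
  obtain w x z where y: "y = (w, x, z)" by (cases y) auto
  define K where "K = 28 * \<bar>\<alpha> * \<delta> / k1\<bar> + 4 * \<bar>\<beta> * \<delta>\<bar>"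
  note components = abs_le_norm_triple[where w = w and x = x and z = z, folded y]
  have "1 - x - z \<noteq> 0" using components assms by linarith
  from scpw_field_minus_linear[OF this, of k1 \<alpha> \<beta> \<delta> w]
    scpw_remainder_bounds[OF assms components, of "\<alpha> * \<delta> / k1" "\<beta> * \<delta>"]
  obtain Rx Rz where
    R: "scpw_field k1 \<alpha> \<beta> \<delta> y - scpw_linear k1 (\<alpha> * \<delta> / k1 + \<beta> * \<delta> - (\<delta> + 1)) \<delta> y = (0, Rx, Rz)"
    and "\<bar>Rx\<bar> \<le> K * norm y * \<bar>x\<bar>" "\<bar>Rz\<bar> \<le> K * norm y * \<bar>x\<bar>"
    unfolding y K_def by blast
  moreover have "norm (0::real, Rx, Rz) \<le> \<bar>Rx\<bar> + \<bar>Rz\<bar>" using norm_Pair_le[of Rx Rz] by simp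
  ultimately have "norm (scpw_field k1 \<alpha> \<beta> \<delta> y - scpw_linear k1 (\<alpha> * \<delta> / k1 + \<beta> * \<delta> - (\<delta> + 1)) \<delta> y)
      \<le> K * norm y * \<bar>x\<bar> + K * norm y * \<bar>x\<bar>"
    unfolding R by linarith
  also have "\<dots> = 2 * K * norm y * \<bar>x\<bar>" by simp
  also have "\<dots> \<le> 2 * K * norm y * norm y"
    using components(2) unfolding K_def by (intro mult_left_mono) auto
  finally show ?thesis unfolding K_def by (simp add: power2_eq_square algebra_simps)
qed

(* A solution of the Lyapunov equation for the (x,z)-block [[a, 1], [b, -2]] of the linearisation:
   along that block its derivative is 2(2a + b)(b x^2 + z^2). *)
definition scpw_lyapunov :: "real \<Rightarrow> real \<Rightarrow> real \<Rightarrow> real \<times> real \<times> real \<Rightarrow> real" where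
  "scpw_lyapunov a b c = (\<lambda>(w, x, z). 2 * b * x^2 + 2 * b * x * z - a * z^2 + c * w^2)"

definition scpw_lyapunov_deriv :: "real \<Rightarrow> real \<Rightarrow> real \<Rightarrow> real \<times> real \<times> real \<Rightarrow> real \<times> real \<times> real \<Rightarrow> real" where
  "scpw_lyapunov_deriv a b c = (\<lambda>(w, x, z) (v, u, s).
     4 * b * x * u + 2 * b * (u * z + x * s) - 2 * a * z * s + 2 * c * w * v)"

lemma scpw_lyapunov_has_derivative:
  "(scpw_lyapunov a b c has_derivative scpw_lyapunov_deriv a b c y) (at y)"
proof -
  have "(scpw_lyapunov a b c has_derivative (\<lambda>h. 4 * b * fst (snd y) * fst (snd h)
      + 2 * b * (fst (snd h) * snd (snd y) + fst (snd y) * snd (snd h))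
      - 2 * a * snd (snd y) * snd (snd h) + 2 * c * fst y * fst h)) (at y)"
    unfolding scpw_lyapunov_def case_prod_beta
    by (auto intro!: derivative_eq_intros simp: algebra_simps)
  then show ?thesis unfolding scpw_lyapunov_deriv_def case_prod_beta .
qed

lemma scpw_lyapunov_deriv_bound:
  "\<bar>scpw_lyapunov_deriv a b c y h\<bar> \<le> (8 * \<bar>b\<bar> + 2 * \<bar>a\<bar> + 2 * \<bar>c\<bar>) * norm y * norm h"
proof -
  obtain w x z v u s where yh: "y = (w, x, z)" "h = (v, u, s)" by (cases y, cases h) auto
  note y = abs_le_norm_triple[where w = w and x = x and z = z, folded yh(1)]
  note h = abs_le_norm_triple[where w = v and x = u and z = s, folded yh(2)]
  have xu: "\<bar>x * u\<bar> \<le> norm y * norm h" and xs: "\<bar>x * s\<bar> \<le> norm y * norm h"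
    and zs: "\<bar>z * s\<bar> \<le> norm y * norm h" and wv: "\<bar>w * v\<bar> \<le> norm y * norm h"
    using y h by (auto intro: abs_mult_le)
  have "\<bar>u * z\<bar> \<le> norm y * norm h" using abs_mult_le[OF h(2) y(3)] by (simp add: mult.commute)
  then have "\<bar>u * z + x * s\<bar> \<le> 2 * (norm y * norm h)"
    using abs_triangle_ineq[of "u * z" "x * s"] xs by linarith
  then have "\<bar>2 * b * (u * z + x * s)\<bar> \<le> 2 * \<bar>b\<bar> * (2 * (norm y * norm h))"
    by (rule abs_mult_le[rotated]) (simp add: abs_mult)
  moreover have "\<bar>4 * b * (x * u)\<bar> \<le> 4 * \<bar>b\<bar> * (norm y * norm h)"
    by (rule abs_mult_le[OF _ xu]) (simp add: abs_mult)
  moreover have "\<bar>2 * a * (z * s)\<bar> \<le> 2 * \<bar>a\<bar> * (norm y * norm h)"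
    by (rule abs_mult_le[OF _ zs]) (simp add: abs_mult)
  moreover have "\<bar>2 * c * (w * v)\<bar> \<le> 2 * \<bar>c\<bar> * (norm y * norm h)"
    by (rule abs_mult_le[OF _ wv]) (simp add: abs_mult)
  ultimately show ?thesis
    unfolding yh scpw_lyapunov_deriv_def prod.case by (simp add: algebra_simps) linarith
qed

lemma scpw_lyapunov_upper:
  "scpw_lyapunov a b c y \<le> (3 * \<bar>b\<bar> + \<bar>a\<bar> + \<bar>c\<bar>) * (norm y)^2"
proof -
  obtain w x z where y: "y = (w, x, z)" by (cases y) auto
  have "2 * x * z \<le> x^2 + z^2" using zero_le_power2[of "x - z"] by (simp add: power2_eq_square algebra_simps)
  moreover have "- (2 * x * z) \<le> x^2 + z^2"
    using zero_le_power2[of "x + z"] by (simp add: power2_eq_square algebra_simps)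
  ultimately have "\<bar>b * (2 * x * z)\<bar> \<le> \<bar>b\<bar> * (x^2 + z^2)"
    by (intro abs_mult_le) auto
  then have "b * (2 * x * z) \<le> \<bar>b\<bar> * (x^2 + z^2)" by linarith
  moreover have "2 * b * x^2 \<le> 2 * \<bar>b\<bar> * x^2" "- a * z^2 \<le> \<bar>a\<bar> * z^2" "c * w^2 \<le> \<bar>c\<bar> * w^2"
    by (rule mult_right_mono; simp)+
  ultimately have "scpw_lyapunov a b c y \<le> 3 * \<bar>b\<bar> * x^2 + (\<bar>b\<bar> + \<bar>a\<bar>) * z^2 + \<bar>c\<bar> * w^2"
    unfolding y scpw_lyapunov_def by (simp add: algebra_simps)
  also have "\<dots> \<le> (3 * \<bar>b\<bar> + \<bar>a\<bar> + \<bar>c\<bar>) * (w^2 + x^2 + z^2)"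
    by (simp add: algebra_simps add_mono mult_left_mono)
  finally show ?thesis unfolding y norm_triple_squared .
qed

lemma scpw_lyapunov_lower:
  assumes "0 < b" "b < - 2 * a" "0 < c"
  obtains m where "m > 0" "\<And>y. m * (norm y)^2 \<le> scpw_lyapunov a b c y"
proof -
  define m where "m = (4 * (2 * b) * (- a) - (2 * b)^2) / (8 * (2 * b + - a))"
  have disc: "(2 * b)^2 < 4 * (2 * b) * (- a)"
    using mult_strict_left_mono[OF assms(2), of "4 * b"] assms(1) by (simp add: power2_eq_square)
  have "m > 0" unfolding m_def using assms disc by (intro divide_pos_pos) auto
  show thesis
  proof (rule that[of "min m c"])
    show "min m c > 0" using \<open>m > 0\<close> \<open>c > 0\<close> by simp
    fix y :: "real \<times> real \<times> real"
    obtain w x z where y: "y = (w, x, z)" by (cases y) auto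
    have "min m c * (norm y)^2 \<le> m * (x^2 + z^2) + c * w^2"
      unfolding y norm_triple_squared by (simp add: algebra_simps add_mono mult_right_mono)
    also have "m * (x^2 + z^2) \<le> 2 * b * x^2 + 2 * b * x * z + - a * z^2"
      unfolding m_def using quadratic_form_lower_bound[OF _ _ disc] assms by simp
    finally show "min m c * (norm y)^2 \<le> scpw_lyapunov a b c y"
      unfolding y scpw_lyapunov_def by simp
  qed
qed

lemma scpw_lyapunov_deriv_linear:
  "scpw_lyapunov_deriv a (2 * \<delta>) c (w, x, z) (scpw_linear k1 a \<delta> (w, x, z))
     = 2 * (2 * a + 2 * \<delta>) * (2 * \<delta> * x^2 + z^2) + c * (2 * k1 * \<delta> * w * x - 2 * w^2)"
  unfolding scpw_lyapunov_deriv_def scpw_linear_def by (simp add: algebra_simps power2_eq_square)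

(* The weight -\<sigma> (2\<delta>)/(k1 \<delta>)^2 of the w-direction makes the w x cross term complete a square. *)
lemma scpw_lyapunov_deriv_linear_definite:
  fixes k1 a \<delta> :: real
  defines "\<sigma> \<equiv> 2 * a + 2 * \<delta>"
  assumes "k1 * \<delta> \<noteq> 0" "\<delta> > 0"
  shows "\<bar>\<sigma>\<bar> * min (min (2 * \<delta>) (2 * \<delta> / (k1 * \<delta>)^2)) 2 * (norm y)^2
    \<le> sgn \<sigma> * scpw_lyapunov_deriv a (2 * \<delta>) (- \<sigma> * (2 * \<delta>) / (k1 * \<delta>)^2) y (scpw_linear k1 a \<delta> y)"
proof -
  obtain w x z where y: "y = (w, x, z)" by (cases y) auto
  define q where "q = min (min (2 * \<delta>) (2 * \<delta> / (k1 * \<delta>)^2)) 2"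
  define Q where "Q = 2 * \<delta> * x^2 + 2 * \<delta> / (k1 * \<delta>)^2 * w^2 + 2 * \<delta> * (x - w / (k1 * \<delta>))^2 + 2 * z^2"
  have eq: "scpw_lyapunov_deriv a (2 * \<delta>) (- \<sigma> * (2 * \<delta>) / (k1 * \<delta>)^2) y (scpw_linear k1 a \<delta> y) = \<sigma> * Q"
    unfolding y scpw_lyapunov_deriv_linear Q_def \<sigma>_def[symmetric] using assms(2)
    by (simp add: field_simps power2_eq_square)
  have "q * (norm y)^2 \<le> Q"
  proof -
    have "q \<le> 2 * \<delta> / (k1 * \<delta>)^2" "q \<le> 2 * \<delta>" "q \<le> 2" unfolding q_def by auto
    then have "q * w^2 \<le> 2 * \<delta> / (k1 * \<delta>)^2 * w^2" "q * x^2 \<le> 2 * \<delta> * x^2" "q * z^2 \<le> 2 * z^2"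
      by (intro mult_right_mono; simp)+
    then have "q * (norm y)^2 \<le> 2 * \<delta> / (k1 * \<delta>)^2 * w^2 + 2 * \<delta> * x^2 + 2 * z^2"
      unfolding y norm_triple_squared distrib_left by linarith
    also have "\<dots> \<le> Q" unfolding Q_def using \<open>\<delta> > 0\<close> by simp
    finally show ?thesis .
  qed
  then have "\<bar>\<sigma>\<bar> * (q * (norm y)^2) \<le> \<bar>\<sigma>\<bar> * Q" by (rule mult_left_mono) simp
  also have "\<bar>\<sigma>\<bar> * Q = sgn \<sigma> * (\<sigma> * Q)" by (simp add: abs_sgn mult_ac)
  finally show ?thesis unfolding q_def eq by (simp add: mult.assoc)
qed

lemma scpw_lyapunov_deriv_remainder:
  fixes k1 \<alpha> \<beta> \<delta> :: real
  defines "a \<equiv> \<alpha> * \<delta> / k1 + \<beta> * \<delta> - (\<delta> + 1)"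
  obtains M where "M \<ge> 0" "\<And>y. norm y \<le> 1/4 \<Longrightarrow>
    \<bar>scpw_lyapunov_deriv a b c y (scpw_field k1 \<alpha> \<beta> \<delta> y - scpw_linear k1 a \<delta> y)\<bar> \<le> M * norm y * (norm y)^2"
proof
  define C where "C = 8 * \<bar>b\<bar> + 2 * \<bar>a\<bar> + 2 * \<bar>c\<bar>"
  define K where "K = 56 * \<bar>\<alpha> * \<delta> / k1\<bar> + 8 * \<bar>\<beta> * \<delta>\<bar>"
  show "C * K \<ge> 0" unfolding C_def K_def by simp
  fix y :: "real \<times> real \<times> real" assume "norm y \<le> 1/4"
  then have "norm (scpw_field k1 \<alpha> \<beta> \<delta> y - scpw_linear k1 a \<delta> y) \<le> K * (norm y)^2"
    using scpw_field_remainder unfolding K_def a_def by blast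
  then have "C * norm y * norm (scpw_field k1 \<alpha> \<beta> \<delta> y - scpw_linear k1 a \<delta> y) \<le> C * norm y * (K * (norm y)^2)"
    unfolding C_def by (intro mult_left_mono) auto
  with scpw_lyapunov_deriv_bound[of a b c y "scpw_field k1 \<alpha> \<beta> \<delta> y - scpw_linear k1 a \<delta> y"]
  show "\<bar>scpw_lyapunov_deriv a b c y (scpw_field k1 \<alpha> \<beta> \<delta> y - scpw_linear k1 a \<delta> y)\<bar> \<le> C * K * norm y * (norm y)^2"
    unfolding C_def by (simp add: mult_ac)
qed

lemma scpw_lyapunov_deriv_along_field:
  fixes k1 \<alpha> \<beta> \<delta> :: real
  defines "a \<equiv> \<alpha> * \<delta> / k1 + \<beta> * \<delta> - (\<delta> + 1)"
  defines "\<sigma> \<equiv> 2 * a + 2 * \<delta>"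
  defines "V' \<equiv> scpw_lyapunov_deriv a (2 * \<delta>) (- \<sigma> * (2 * \<delta>) / (k1 * \<delta>)^2)"
  assumes "k1 * \<delta> \<noteq> 0" "\<delta> > 0" "\<sigma> \<noteq> 0"
  obtains r \<mu> where "0 < r" "r \<le> 1/4" "0 < \<mu>"
    "\<And>y. norm y \<le> r \<Longrightarrow> \<mu> * (norm y)^2 \<le> sgn \<sigma> * V' y (scpw_field k1 \<alpha> \<beta> \<delta> y)"
proof -
  define \<mu> where "\<mu> = \<bar>\<sigma>\<bar> * min (min (2 * \<delta>) (2 * \<delta> / (k1 * \<delta>)^2)) 2"
  obtain M where "M \<ge> 0" and remainder: "\<And>y. norm y \<le> 1/4 \<Longrightarrow>
      \<bar>V' y (scpw_field k1 \<alpha> \<beta> \<delta> y - scpw_linear k1 a \<delta> y)\<bar> \<le> M * norm y * (norm y)^2"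
    using scpw_lyapunov_deriv_remainder unfolding V'_def a_def by blast
  define r where "r = min (1/4) (\<mu> / (2 * (M + 1)))"
  have "\<mu> > 0" unfolding \<mu>_def using assms by simp
  then have "r > 0" "r \<le> 1/4" "M * r \<le> \<mu> / 2"
    unfolding r_def using \<open>M \<ge> 0\<close> by (auto simp: field_simps min_def)
  show thesis
  proof (rule that[OF \<open>r > 0\<close> \<open>r \<le> 1/4\<close>, of "\<mu> / 2"])
    show "\<mu> / 2 > 0" using \<open>\<mu> > 0\<close> by simp
    fix y :: "real \<times> real \<times> real" assume "norm y \<le> r"
    let ?J = "scpw_linear k1 a \<delta> y" and ?f = "scpw_field k1 \<alpha> \<beta> \<delta> y"
    have "\<bar>V' y (?f - ?J)\<bar> \<le> M * norm y * (norm y)^2"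
      using remainder \<open>norm y \<le> r\<close> \<open>r \<le> 1/4\<close> by simp
    also have "\<dots> \<le> M * r * (norm y)^2"
      using \<open>norm y \<le> r\<close> \<open>M \<ge> 0\<close> by (intro mult_right_mono mult_left_mono) auto
    also have "\<dots> \<le> \<mu> / 2 * (norm y)^2"
      using \<open>M * r \<le> \<mu> / 2\<close> by (intro mult_right_mono) auto
    finally have "\<bar>sgn \<sigma> * V' y (?f - ?J)\<bar> \<le> \<mu> / 2 * (norm y)^2"
      using \<open>\<sigma> \<noteq> 0\<close> by (simp add: abs_mult)
    then have "- (\<mu> / 2 * (norm y)^2) \<le> sgn \<sigma> * V' y (?f - ?J)"
      by (simp add: abs_le_iff)
    moreover have "\<mu> * (norm y)^2 \<le> sgn \<sigma> * V' y ?J"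
      using scpw_lyapunov_deriv_linear_definite[OF assms(4,5), of a y]
      unfolding \<mu>_def V'_def \<sigma>_def by simp
    moreover have "V' y ?f = V' y ?J + V' y (?f - ?J)"
      using linear_diff[OF has_derivative_linear[OF scpw_lyapunov_has_derivative]]
      unfolding V'_def by simp
    ultimately show "\<mu> / 2 * (norm y)^2 \<le> sgn \<sigma> * V' y ?f"
      by (simp add: distrib_left)
  qed
qed

lemma scpw_loc_asym_stable:
  assumes "k1 > 0" "\<delta> > 0" "\<delta> * (\<alpha> / k1 + \<beta>) < 1"
  shows "loc_asym_stable (scpw_field k1 \<alpha> \<beta> \<delta>) 0"
proof -
  define a where "a = \<alpha> * \<delta> / k1 + \<beta> * \<delta> - (\<delta> + 1)"
  define \<sigma> where "\<sigma> = 2 * a + 2 * \<delta>"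
  define c where "c = - \<sigma> * (2 * \<delta>) / (k1 * \<delta>)^2"
  have "\<sigma> = 2 * (\<delta> * (\<alpha> / k1 + \<beta>) - 1)"
    unfolding \<sigma>_def a_def by (simp add: algebra_simps)
  then have "\<sigma> < 0" using assms(3) by simp
  then have "c > 0" unfolding c_def using assms(1,2) by (intro divide_pos_pos mult_pos_pos) auto
  obtain r \<mu> where "0 < r" "0 < \<mu>" and decrease:
    "\<And>y. norm y \<le> r \<Longrightarrow> \<mu> * (norm y)^2 \<le> sgn \<sigma> * scpw_lyapunov_deriv a (2 * \<delta>) c y (scpw_field k1 \<alpha> \<beta> \<delta> y)"
    by (rule scpw_lyapunov_deriv_along_field[of k1 \<delta> \<alpha> \<beta>, folded a_def, folded \<sigma>_def, folded c_def])
      (use assms(1,2) \<open>\<sigma> < 0\<close> in auto)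
  obtain m where "m > 0" and lower: "\<And>y. m * (norm y)^2 \<le> scpw_lyapunov a (2 * \<delta>) c y"
    using scpw_lyapunov_lower[of "2 * \<delta>" a c] \<open>\<sigma> < 0\<close> \<open>c > 0\<close> assms(2) unfolding \<sigma>_def by auto
  show ?thesis
  proof (rule lyapunov_loc_asym_stable[where f = "scpw_field k1 \<alpha> \<beta> \<delta>", OF scpw_field_zero \<open>0 < r\<close> \<open>m > 0\<close> _ \<open>0 < \<mu>\<close>])
    show "0 < 3 * \<bar>2 * \<delta>\<bar> + \<bar>a\<bar> + \<bar>c\<bar>" using assms(2) by simp
    fix y :: "real \<times> real \<times> real" assume "norm y \<le> r"
    show "m * (norm y)^2 \<le> scpw_lyapunov a (2 * \<delta>) c y
        \<and> scpw_lyapunov a (2 * \<delta>) c y \<le> (3 * \<bar>2 * \<delta>\<bar> + \<bar>a\<bar> + \<bar>c\<bar>) * (norm y)^2"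
      using lower scpw_lyapunov_upper by blast
    show "(scpw_lyapunov a (2 * \<delta>) c has_derivative scpw_lyapunov_deriv a (2 * \<delta>) c y) (at y)"
      by (rule scpw_lyapunov_has_derivative)
    show "scpw_lyapunov_deriv a (2 * \<delta>) c y (scpw_field k1 \<alpha> \<beta> \<delta> y) \<le> - \<mu> * (norm y)^2"
      using decrease[OF \<open>norm y \<le> r\<close>] \<open>\<sigma> < 0\<close> by simp
  qed
qed

lemma scpw_eq_unstable:
  assumes "k1 > 0" "\<delta> > 0" "\<delta> * (\<alpha> / k1 + \<beta>) > 1"
  shows "eq_unstable (scpw_field k1 \<alpha> \<beta> \<delta>) 0"
proof -
  define a where "a = \<alpha> * \<delta> / k1 + \<beta> * \<delta> - (\<delta> + 1)"
  define \<sigma> where "\<sigma> = 2 * a + 2 * \<delta>"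
  define c where "c = - \<sigma> * (2 * \<delta>) / (k1 * \<delta>)^2"
  have "\<sigma> = 2 * (\<delta> * (\<alpha> / k1 + \<beta>) - 1)"
    unfolding \<sigma>_def a_def by (simp add: algebra_simps)
  then have "\<sigma> > 0" using assms(3) by simp
  obtain r \<mu> where "0 < r" "r \<le> 1/4" "0 < \<mu>" and increase:
    "\<And>y. norm y \<le> r \<Longrightarrow> \<mu> * (norm y)^2 \<le> sgn \<sigma> * scpw_lyapunov_deriv a (2 * \<delta>) c y (scpw_field k1 \<alpha> \<beta> \<delta> y)"
    by (rule scpw_lyapunov_deriv_along_field[of k1 \<delta> \<alpha> \<beta>, folded a_def, folded \<sigma>_def, folded c_def])
      (use assms(1,2) \<open>\<sigma> > 0\<close> in auto)
  obtain L where lip: "L-lipschitz_on (cball 0 r) (scpw_field k1 \<alpha> \<beta> \<delta>)"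
    using scpw_field_lipschitz[OF \<open>r \<le> 1/4\<close>] by blast
  show ?thesis
  proof (rule lyapunov_eq_unstable[where f = "scpw_field k1 \<alpha> \<beta> \<delta>", OF scpw_field_zero \<open>0 < r\<close> _ \<open>0 < \<mu>\<close> lip])
    show "0 < 3 * \<bar>2 * \<delta>\<bar> + \<bar>a\<bar> + \<bar>c\<bar>" using assms(2) by simp
    fix y :: "real \<times> real \<times> real" assume "norm y \<le> r"
    show "scpw_lyapunov a (2 * \<delta>) c y \<le> (3 * \<bar>2 * \<delta>\<bar> + \<bar>a\<bar> + \<bar>c\<bar>) * (norm y)^2"
      by (rule scpw_lyapunov_upper)
    show "(scpw_lyapunov a (2 * \<delta>) c has_derivative scpw_lyapunov_deriv a (2 * \<delta>) c y) (at y)"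
      by (rule scpw_lyapunov_has_derivative)
    show "\<mu> * (norm y)^2 \<le> scpw_lyapunov_deriv a (2 * \<delta>) c y (scpw_field k1 \<alpha> \<beta> \<delta> y)"
      using increase[OF \<open>norm y \<le> r\<close>] \<open>\<sigma> > 0\<close> by simp
  next
    fix \<eta> :: real assume "\<eta> > 0"
    then have "norm (0::real, \<eta> / 2, 0::real) < \<eta>" "scpw_lyapunov a (2 * \<delta>) c (0, \<eta> / 2, 0) > 0"
      using assms(2) by (simp_all add: norm_Pair scpw_lyapunov_def)
    then show "\<exists>y. norm y < \<eta> \<and> scpw_lyapunov a (2 * \<delta>) c y > 0" by blast
  qed
qed

lemma scpw_coefficient_identity:
  fixes k1 k2 k3 :: real
  assumes "k1 > 0" "k2 - k1^2 > 0"
  shows "(k2^2 - k1 * k3) / (k2 - k1^2) / k1 + ((k3 - k2 * k1) / (k2 - k1^2) - 1) = (k2 - k1) / k1"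
proof -
  define W where "W = k2 - k1^2"
  have "W \<noteq> 0" unfolding W_def using assms(2) by simp
  have "(k2^2 - k1 * k3) / W / k1 + ((k3 - k2 * k1) / W - 1) = (k2^2 - k1 * k3 + k1 * (k3 - k2 * k1)) / (k1 * W) - 1"
    using \<open>W \<noteq> 0\<close> assms(1) by (simp add: field_simps)
  also have "k2^2 - k1 * k3 + k1 * (k3 - k2 * k1) = k2 * W"
    unfolding W_def by (simp add: algebra_simps power2_eq_square)
  finally show ?thesis unfolding W_def[symmetric] using \<open>W \<noteq> 0\<close> assms(1) by (simp add: field_simps)
qed

theorem mainTheorem1:
  fixes p :: "nat \<Rightarrow> real" and k1 k2 k3 \<alpha> \<beta> \<delta> \<delta>c :: real
  assumes p_nonneg: "\<forall>n. p n \<ge> 0"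
    and p_sum: "p sums 1"
    and p_mom3: "summable (\<lambda>n. real n ^ 3 * p n)"
    and k1_def: "k1 = (\<Sum>n. real n * p n)"
    and k2_def: "k2 = (\<Sum>n. real n ^ 2 * p n)"
    and k3_def: "k3 = (\<Sum>n. real n ^ 3 * p n)"
    and k1_pos: "k1 > 0"
    and var_pos: "k2 - k1^2 > 0"
    and k2_gt: "k2 > k1"
    and \<alpha>_def: "\<alpha> = (k2^2 - k1 * k3) / (k2 - k1^2)"
    and \<beta>_def: "\<beta> = (k3 - k2 * k1) / (k2 - k1^2) - 1"
    and \<delta>_pos: "\<delta> > 0"
    and \<delta>c_def: "\<delta>c = k1 / (k2 - k1)"
  shows "(\<delta> < \<delta>c \<longrightarrow> loc_asym_stable (scpw_field k1 \<alpha> \<beta> \<delta>) (0, 0, 0))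
       \<and> (\<delta> > \<delta>c \<longrightarrow> eq_unstable (scpw_field k1 \<alpha> \<beta> \<delta>) (0, 0, 0))"
proof -
  (* Only the inequalities between k1 and k2 are used, not their meaning as moments of p. *)
  have R0: "\<delta> * (\<alpha> / k1 + \<beta>) = \<delta> / \<delta>c"
    using scpw_coefficient_identity[OF k1_pos var_pos] unfolding \<alpha>_def \<beta>_def \<delta>c_def by simp
  have "\<delta>c > 0" unfolding \<delta>c_def using k1_pos k2_gt by simp
  then show ?thesis
    using scpw_loc_asym_stable[of k1 \<delta> \<alpha> \<beta>] scpw_eq_unstable[of k1 \<delta> \<alpha> \<beta>] k1_pos \<delta>_pos
    unfolding R0 zero_prod_def[symmetric] by simp
qed

end
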